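(* Assume $\delta<d$, $\gamma\ge1$ and $\alpha=\gamma/(\delta-d)$. Then $$G_z^\alpha(w)=G_h(z^{-\alpha}w)+o(1)\quad\text{as } z\to\infty,$$ i.e. for every $\epsilon>0$ there is $R>0$ such that $|G_z^\alpha(w)-G_h(z^{-\alpha}w)|<\epsilon$ for all $(z,w)$ with $|z|>R$.
   Context: Let $p(z)=z^\delta+O(z^{\delta-1})$ be a monic polynomial of degree $\delta\ge 2$, and let $q(z,w)=b(z)w^d+(\text{terms of lower degree in } w)$ be a polynomial with $d=\deg_w q\ge 2$, where $b$ is a monic polynomial of degree $\gamma$. Let $f(z,w)=(p(z),q(z,w))$. Write $Q_z^n=q_{p^{n-1}(z)}\circ\cdots\circ q_{p(z)}\circ q_z$ with $q_z=q(z,\cdot)$. For $\delta<d$, $\alpha=\max\big(\{-\gamma/(d-\delta)\}\cup\{(n_j-\gamma)/(d-m_j)\}\big)$, the second set over monomials $z^{n_j}w^{m_j}$ appearing in $q$ with nonzero coefficient and $m_j<d$. $G_z^\alpha(w)=\lim_{n\to\infty}d^{-n}\log^+\big(|Q_z^n(w)|/|p^n(z)|^\alpha\big)$. Give the monomial $z^nw^m$ weight $n+\alpha m$; let $h(z,w)$ be the sum of those terms of $q$ of weight exactly $\gamma+\alpha d$ (the maximal weight; it contains $z^\gamma w^d$), and $h(c)=h(1,c)$, a one-variable polynomial of degree $d$, with Green function $G_h(c)=\lim_{n\to\infty}d^{-n}\log^+|h^n(c)|$. The value $G_h(z^{-\alpha}w)$ does not depend on the choice of branch of $z^{-\alpha}$.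 *)

theory Defs
  imports "HOL-Analysis.Analysis" "HOL-Computational_Algebra.Polynomial"
begin

text \<open>A polynomial q(z,w) in two complex variables is given by its coefficient
  function a, where a n m is the coefficient of the monomial z^n w^m
  (finitely supported).\<close>

definition supp2 :: "(nat \<Rightarrow> nat \<Rightarrow> complex) \<Rightarrow> (nat \<times> nat) set" where
  "supp2 a = {(n, m). a n m \<noteq> 0}"

definition qeval :: "(nat \<Rightarrow> nat \<Rightarrow> complex) \<Rightarrow> complex \<Rightarrow> complex \<Rightarrow> complex" where
  "qeval a z w = (\<Sum>(n, m)\<in>supp2 a. a n m * z ^ n * w ^ m)"

text \<open>Qiter p a k z = Q_z^k = q_{p^{k-1}(z)} o ... o q_{p(z)} o q_z.\<close>
primrec Qiter :: "complex poly \<Rightarrow> (nat \<Rightarrow> nat \<Rightarrow> complex) \<Rightarrow> nat \<Rightarrow> complex \<Rightarrow> complex \<Rightarrow> complex" where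
  "Qiter p a 0 z w = w"
| "Qiter p a (Suc k) z w = Qiter p a k (poly p z) (qeval a z w)"

definition log_plus :: "real \<Rightarrow> real" where
  "log_plus x = (if x > 1 then ln x else 0)"

definition alpha_exp :: "(nat \<Rightarrow> nat \<Rightarrow> complex) \<Rightarrow> nat \<Rightarrow> nat \<Rightarrow> nat \<Rightarrow> real" where
  "alpha_exp a \<gamma> \<delta> d = Max ({- real \<gamma> / (real d - real \<delta>)} \<union>
      {(real n - real \<gamma>) / (real d - real m) | n m. a n m \<noteq> 0 \<and> m < d})"

definition G_alpha :: "complex poly \<Rightarrow> (nat \<Rightarrow> nat \<Rightarrow> complex) \<Rightarrow> nat \<Rightarrow> real \<Rightarrow> complex \<Rightarrow> complex \<Rightarrow> real" where
  "G_alpha p a d \<alpha> z w = lim (\<lambda>k. log_plus (cmod (Qiter p a k z w) / (cmod ((poly p ^^ k) z)) powr \<alpha>) / real d ^ k)"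

text \<open>h(c) = h(1,c): sum of the terms of q of weight exactly gamma + alpha d,
  where z^n w^m has weight n + alpha m.\<close>
definition hpoly :: "(nat \<Rightarrow> nat \<Rightarrow> complex) \<Rightarrow> real \<Rightarrow> nat \<Rightarrow> nat \<Rightarrow> complex \<Rightarrow> complex" where
  "hpoly a \<alpha> \<gamma> d c = (\<Sum>(n, m)\<in>{(n, m). a n m \<noteq> 0 \<and> real n + \<alpha> * real m = real \<gamma> + \<alpha> * real d}. a n m * c ^ m)"

definition G_green :: "(complex \<Rightarrow> complex) \<Rightarrow> nat \<Rightarrow> complex \<Rightarrow> real" where
  "G_green h d c = lim (\<lambda>k. log_plus (cmod ((h ^^ k) c)) / real d ^ k)"

end

theory Submission
  imports Defs
begin

(* Write \<lambda>_n = (p^n z)^(-\<alpha>), using a branch of the logarithm continued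
   along the orbit z, p z, p^2 z, ...  In the rescaled coordinate W_n = \<lambda>_n Q_z^n(w)
   the skew product becomes W_(n+1) = \<theta>_n h(W_n) + E_n(W_n), where the multiplier
   \<theta>_n = (p^(n+1) z / (p^n z)^\<delta>)^(-\<alpha>) is close to 1 because p is monic, and E_n
   collects the monomials of q of weight below \<gamma> + \<alpha> d; these carry negative powers
   of |p^n z| and are uniformly small once |z| is large. *)

lemma log_plus_nonneg: "log_plus x \<ge> 0"
  by (simp add: log_plus_def)

lemma log_plus_ge_ln: "x > 0 \<Longrightarrow> ln x \<le> log_plus x"
  by (auto simp: log_plus_def)

lemma log_plus_mono: "0 \<le> a \<Longrightarrow> a \<le> b \<Longrightarrow> log_plus a \<le> log_plus b"
  by (auto simp: log_plus_def)

lemma log_plus_lipschitz: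
  assumes "a \<ge> 0" "b \<ge> 0" shows "\<bar>log_plus a - log_plus b\<bar> \<le> \<bar>a - b\<bar>"
proof -
  have key: "log_plus x - log_plus y \<le> x - y" if "0 \<le> y" "y \<le> x" for x y :: real
  proof (cases "y > 1")
    case True
    have "ln x - ln y = ln (x / y)" using True that by (simp add: ln_div)
    also have "\<dots> \<le> x / y - 1" using True that by (intro ln_le_minus_one) auto
    also have "\<dots> = (x - y) / y" using True by (simp add: field_simps)
    also have "\<dots> \<le> x - y" using True that by (simp add: divide_le_eq mult_le_cancel_left1)
    finally show ?thesis using True that by (simp add: log_plus_def)
  next
    case False
    have "x > 1 \<Longrightarrow> ln x \<le> x - 1" by (intro ln_le_minus_one) auto
    then show ?thesis using False that by (auto simp: log_plus_def)
  qed
  show ?thesis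
    using key[of b a] key[of a b] log_plus_mono[of b a] log_plus_mono[of a b] assms
    by (cases "b \<le> a") auto
qed

lemma log_plus_rel:
  fixes X Y :: complex
  assumes XY: "cmod (X - Y) \<le> t * (1 + cmod Y)" and t: "0 \<le> t" "t \<le> 1/4"
  shows "\<bar>log_plus (cmod X) - log_plus (cmod Y)\<bar> \<le> 4 * t"
proof (cases "cmod Y \<le> 1")
  case True
  have "\<bar>cmod X - cmod Y\<bar> \<le> cmod (X - Y)" by (rule norm_triangle_ineq3)
  also have "\<dots> \<le> 2 * t" using XY True t mult_left_mono[of "1 + cmod Y" 2 t] by linarith
  finally show ?thesis using log_plus_lipschitz[of "cmod X" "cmod Y"] t by auto
next
  case False
  let ?x = "cmod X" and ?y = "cmod Y"
  have "t * (1 + ?y) \<le> t * (2 * ?y)" using False t by (intro mult_left_mono) auto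
  then have dist: "cmod (X - Y) \<le> 2 * t * ?y" using XY by simp
  have x_up: "?x \<le> (1 + 2*t) * ?y" using dist norm_triangle_ineq2[of X Y] by (simp add: algebra_simps)
  have x_lo: "?x \<ge> ?y / 2"
    using dist norm_triangle_ineq3[of X Y] t mult_right_mono[of "1/2" "1 - 2*t" ?y]
    by (simp add: algebra_simps)
  have up: "log_plus ?x \<le> ln ?y + 2 * t"
  proof (cases "?x > 1")
    case True
    have "ln ?x \<le> ln ((1 + 2*t) * ?y)" using x_up True by (intro ln_mono) auto
    also have "\<dots> = ln (1 + 2*t) + ln ?y" using t False by (subst ln_mult) auto
    also have "ln (1 + 2*t) \<le> 2 * t" using t by (intro ln_add_one_self_le_self) auto
    finally show ?thesis using True by (simp add: log_plus_def)
  qed (use False t in \<open>simp add: log_plus_def\<close>)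
  have lo: "ln ?y - 4 * t \<le> log_plus ?x"
  proof -
    have xp: "?x > 0" using x_lo False by auto
    have "ln ?y - ln ?x = ln (?y / ?x)" using xp False by (subst ln_div) auto
    also have "\<dots> \<le> ?y / ?x - 1" using xp False by (intro ln_le_minus_one divide_pos_pos) auto
    also have "\<dots> = (?y - ?x) / ?x" using xp by (simp add: field_simps)
    also have "\<dots> \<le> (2 * t * ?y) / ?x"
      using xp dist norm_triangle_ineq3[of X Y] by (intro divide_right_mono) (auto simp: norm_minus_commute)
    also have "\<dots> \<le> 4 * t"
      using xp x_lo t mult_left_mono[of ?y "2 * ?x" "2*t"] by (simp add: divide_le_eq)
    finally show ?thesis using log_plus_ge_ln[OF xp] by linarith
  qed
  show ?thesis using up lo False by (simp add: log_plus_def)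
qed

lemma log_plus_upper:
  assumes "0 \<le> y" "y \<le> A * max 1 x ^ d" "A \<ge> 1" "x \<ge> 0"
  shows "log_plus y \<le> ln A + real d * log_plus x"
proof (cases "y > 1")
  case True
  have lm: "ln (max 1 x) = log_plus x" by (auto simp: log_plus_def max_def)
  have "ln y \<le> ln (A * max 1 x ^ d)" using True assms by (intro ln_mono) auto
  also have "\<dots> = ln A + real d * ln (max 1 x)" using assms by (simp add: ln_mult ln_realpow)
  finally show ?thesis using True lm by (simp add: log_plus_def)
qed (use assms log_plus_nonneg[of x] in \<open>simp add: log_plus_def\<close>)

lemma geometric_increments_limit:
  fixes g :: "nat \<Rightarrow> real" and D K :: real
  assumes D: "D \<ge> 2" and K: "K \<ge> 0" and step: "\<And>n. \<bar>g (Suc n) - g n\<bar> \<le> K / D ^ Suc n"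
  shows "\<bar>lim g - g N\<bar> \<le> K / D ^ N"
proof -
  have Dp: "D > 0" using D by auto
  have "summable (\<lambda>n. g (Suc n) - g n)"
  proof (rule summable_comparison_test[OF _ summable_mult[OF summable_geometric, of "1/D" "K/D"]])
    show "\<exists>N. \<forall>n\<ge>N. norm (g (Suc n) - g n) \<le> K / D * (1 / D) ^ n"
      using step by (auto simp: power_divide field_simps)
  qed (use D in auto)
  then have "(\<lambda>m. g m - g 0) \<longlonglongrightarrow> suminf (\<lambda>n. g (Suc n) - g n)"
    using summable_LIMSEQ by (fastforce simp: sum_lessThan_telescope)
  then have "(\<lambda>m. (g m - g 0) + g 0) \<longlonglongrightarrow> suminf (\<lambda>n. g (Suc n) - g n) + g 0"
    by (intro tendsto_add) auto
  then have conv: "convergent g" by (auto simp: convergent_def)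
  have partial: "\<bar>g (N + j) - g N\<bar> \<le> K / D ^ N - K / D ^ (N + j)" for j
  proof (induction j)
    case (Suc j)
    have "K / D ^ Suc (N + j) + K / D ^ Suc (N + j) = (2 / D) * (K / D ^ (N + j))"
      using Dp by (simp add: field_simps)
    also have "\<dots> \<le> K / D ^ (N + j)" using D Dp K mult_right_mono[of "2/D" 1 "K / D ^ (N + j)"] by auto
    finally show ?case using Suc step[of "N+j"] by simp
  qed simp
  have "eventually (\<lambda>m. \<bar>g m - g N\<bar> \<le> K / D ^ N) sequentially"
  proof (rule eventually_sequentiallyI[of N])
    fix m assume "N \<le> m"
    then obtain j where "m = N + j" using le_Suc_ex by blast
    moreover have "K / D ^ (N + j) \<ge> 0" using K Dp by simp
    ultimately show "\<bar>g m - g N\<bar> \<le> K / D ^ N" using partial[of j] by simp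
  qed
  moreover have "(\<lambda>m. \<bar>g m - g N\<bar>) \<longlonglongrightarrow> \<bar>lim g - g N\<bar>"
    using conv by (intro tendsto_rabs tendsto_diff) (auto simp: convergent_LIMSEQ_iff)
  ultimately show ?thesis by (intro tendsto_upperbound) auto
qed

text \<open>The escape rate \<open>lim log\<^sup>+(r_k) / d^k\<close> of a sequence of moduli.  Both the Green
  function \<open>G_h\<close> and the function \<open>G_z^\<alpha>\<close> are escape rates.\<close>

definition escape_rate :: "nat \<Rightarrow> (nat \<Rightarrow> real) \<Rightarrow> real" where
  "escape_rate d r = lim (\<lambda>k. log_plus (r k) / real d ^ k)"

lemma escape_rate_approx:
  fixes r :: "nat \<Rightarrow> real"
  assumes d: "d \<ge> 2" and K: "K \<ge> 0"
    and step: "\<And>n. \<bar>log_plus (r (Suc n)) - real d * log_plus (r n)\<bar> \<le> K"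
  shows "\<bar>escape_rate d r - log_plus (r N) / real d ^ N\<bar> \<le> K / real d ^ N"
  unfolding escape_rate_def
proof (rule geometric_increments_limit)
  fix n
  have dp: "real d > 0" using d by auto
  have "log_plus (r (Suc n)) / real d ^ Suc n - log_plus (r n) / real d ^ n
     = (log_plus (r (Suc n)) - real d * log_plus (r n)) / real d ^ Suc n"
    using dp by (simp add: field_simps)
  then show "\<bar>log_plus (r (Suc n)) / real d ^ Suc n - log_plus (r n) / real d ^ n\<bar> \<le> K / real d ^ Suc n"
    using step[of n] dp by (simp add: abs_divide divide_right_mono)
qed (use d K in auto)

text \<open>For such maps the escape rate is stable under small multiplicative and additive
  perturbations that change with time; this is the analytic core of the proof.\<close>

locale green_regular =
  fixes h :: "complex \<Rightarrow> complex" and d :: nat and B R1 C :: real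
  assumes d2: "d \<ge> 2" and B1: "B \<ge> 1" and R1: "R1 \<ge> 1" and C0: "C \<ge> 0"
    and h_upper: "\<And>x. cmod (h x) \<le> B * (1 + cmod x) ^ d"
    and h_lower: "\<And>x. cmod x \<ge> R1 \<Longrightarrow> cmod (h x) \<ge> cmod x ^ d / 2"
    and h_lipschitz: "\<And>X Y t. 0 \<le> t \<Longrightarrow> t \<le> 1 \<Longrightarrow> cmod (X - Y) \<le> t * (1 + cmod Y) \<Longrightarrow>
               cmod (h X - h Y) \<le> C * t * (1 + cmod Y) ^ d"
begin

text \<open>Constants: \<open>Cp\<close> compares \<open>(1+|Y|)^d\<close> with \<open>1 + |h Y|\<close>, \<open>Kh\<close> bounds the one-step
  defect of \<open>log\<^sup>+\<close>, and \<open>M\<close> is the error amplification factor per step.\<close>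

definition "Cp = (1 + R1) ^ d + 2 ^ (d + 1)"
definition "Kh = ln (B * 2 ^ d) + real d * ln R1 + ln 2"
definition "M = 1 + C * Cp + 2 ^ d * Cp"

lemma Cp_ge_1: "Cp \<ge> 1"
proof -
  have "0 \<le> (1+R1)^d" using R1 by simp
  moreover have "(1::real) \<le> 2^(d+1)" by (rule one_le_power) simp
  ultimately show ?thesis unfolding Cp_def by linarith
qed

lemma M_ge_1: "M \<ge> 1"
  using C0 Cp_ge_1 unfolding M_def by simp

lemma B_2d_ge_1: "B * 2 ^ d \<ge> 1"
  using mult_mono[of 1 B 1 "2 ^ d"] B1 by simp

lemma Kh_nonneg: "Kh \<ge> 0"
  using B_2d_ge_1 R1 unfolding Kh_def by simp

lemma power_le_Cp: "(1 + cmod Y) ^ d \<le> Cp * (1 + cmod (h Y))"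
proof (cases "cmod Y \<le> R1")
  case True
  have "(1 + cmod Y) ^ d \<le> (1 + R1) ^ d" using True by (intro power_mono) auto
  also have "\<dots> \<le> Cp" unfolding Cp_def by simp
  also have "\<dots> \<le> Cp * (1 + cmod (h Y))" using Cp_ge_1 by simp
  finally show ?thesis .
next
  case False
  have "(1 + cmod Y) ^ d \<le> (2 * cmod Y) ^ d" using False R1 by (intro power_mono) auto
  also have "\<dots> = 2 ^ d * cmod Y ^ d" by (simp add: power_mult_distrib)
  also have "\<dots> \<le> 2 ^ d * (2 * cmod (h Y))" using h_lower[of Y] False by simp
  also have "\<dots> \<le> 2 ^ (d+1) * (1 + cmod (h Y))" by simp
  also have "\<dots> \<le> Cp * (1 + cmod (h Y))" unfolding Cp_def
    using R1 by (intro mult_right_mono) auto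
  finally show ?thesis .
qed

lemma log_plus_step: "\<bar>log_plus (cmod (h x)) - real d * log_plus (cmod x)\<bar> \<le> Kh"
proof -
  have up: "log_plus (cmod (h x)) \<le> ln (B * 2 ^ d) + real d * log_plus (cmod x)"
  proof (rule log_plus_upper)
    have "cmod (h x) \<le> B * (1 + cmod x) ^ d" by (rule h_upper)
    also have "(1 + cmod x) ^ d \<le> (2 * max 1 (cmod x)) ^ d" by (intro power_mono) auto
    finally show "cmod (h x) \<le> B * 2 ^ d * max 1 (cmod x) ^ d"
      using B1 by (simp add: power_mult_distrib mult_ac)
  qed (use B_2d_ge_1 in auto)
  have lo: "real d * log_plus (cmod x) - ln 2 - real d * ln R1 \<le> log_plus (cmod (h x))"
  proof (cases "cmod x \<ge> R1")
    case True
    have xp: "cmod x > 0" using True R1 by auto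
    have lx: "log_plus (cmod x) = ln (cmod x)"
    proof (cases "cmod x > 1")
      case False
      then have "cmod x = 1" using True R1 by auto
      then show ?thesis by (simp add: log_plus_def)
    qed (simp add: log_plus_def)
    have "ln (cmod x ^ d / 2) \<le> log_plus (cmod x ^ d / 2)" using xp by (intro log_plus_ge_ln) auto
    also have "\<dots> \<le> log_plus (cmod (h x))" using h_lower[OF True] by (intro log_plus_mono) auto
    moreover have "real d * ln R1 \<ge> 0" using R1 by simp
    ultimately show ?thesis using xp lx by (simp add: ln_div ln_realpow)
  next
    case False
    have "log_plus (cmod x) \<le> ln R1" using False R1 by (auto simp: log_plus_def intro!: ln_mono)
    then have "real d * log_plus (cmod x) \<le> real d * ln R1" by (intro mult_left_mono) auto
    moreover have "ln (2::real) \<ge> 0" by simp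
    ultimately show ?thesis using log_plus_nonneg[of "cmod (h x)"] by linarith
  qed
  have "ln (B * 2 ^ d) \<ge> 0" "real d * ln R1 \<ge> 0" "ln (2::real) \<ge> 0" using B_2d_ge_1 R1 by auto
  then show ?thesis using up lo unfolding Kh_def by linarith
qed

lemma log_plus_perturbed_step:
  assumes "0 \<le> \<eta>" "\<eta> * ((B + 1) * Cp) \<le> 1/4" "cmod (\<theta> - 1) \<le> \<eta>" "cmod E \<le> \<eta> * (1 + cmod x) ^ d"
  shows "\<bar>log_plus (cmod (\<theta> * h x + E)) - real d * log_plus (cmod x)\<bar> \<le> Kh + 1"
proof -
  have "cmod (\<theta> * h x + E - h x) = cmod ((\<theta> - 1) * h x + E)" by (simp add: algebra_simps)
  also have "\<dots> \<le> cmod (\<theta> - 1) * cmod (h x) + cmod E" by (metis norm_mult norm_triangle_ineq)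
  also have "\<dots> \<le> \<eta> * (B * (1 + cmod x) ^ d) + \<eta> * (1 + cmod x) ^ d"
    using assms h_upper[of x] by (intro add_mono mult_mono) auto
  also have "\<dots> = (\<eta> * (B + 1)) * (1 + cmod x) ^ d" by (simp add: algebra_simps)
  also have "\<dots> \<le> (\<eta> * (B + 1)) * (Cp * (1 + cmod (h x)))"
    using assms B1 power_le_Cp[of x] by (intro mult_left_mono) auto
  finally have "cmod (\<theta> * h x + E - h x) \<le> (\<eta> * ((B + 1) * Cp)) * (1 + cmod (h x))"
    by (simp add: mult_ac)
  then have "\<bar>log_plus (cmod (\<theta> * h x + E)) - log_plus (cmod (h x))\<bar> \<le> 4 * (\<eta> * ((B + 1) * Cp))"
    using assms B1 Cp_ge_1 by (intro log_plus_rel) auto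
  then show ?thesis using log_plus_step[of x] assms by linarith
qed

lemma h_relative_lipschitz:
  assumes t: "0 \<le> t" "t \<le> 1" and XY: "cmod (X - Y) \<le> t * (1 + cmod Y)"
  shows "cmod (h X - h Y) \<le> C * Cp * t * (1 + cmod (h Y))"
proof -
  have "cmod (h X - h Y) \<le> C * t * (1 + cmod Y) ^ d" by (rule h_lipschitz[OF t XY])
  also have "\<dots> \<le> C * t * (Cp * (1 + cmod (h Y)))"
    using C0 t power_le_Cp[of Y] by (intro mult_left_mono) auto
  finally show ?thesis by (simp add: mult_ac)
qed

lemma power_le_Cp_near:
  assumes t: "0 \<le> t" "t \<le> 1" and XY: "cmod (X - Y) \<le> t * (1 + cmod Y)"
  shows "(1 + cmod X) ^ d \<le> 2 ^ d * Cp * (1 + cmod (h Y))"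
proof -
  have "cmod X \<le> cmod Y + cmod (X - Y)" by (metis norm_triangle_sub add.commute)
  then have "1 + cmod X \<le> 2 * (1 + cmod Y)" using XY t mult_right_mono[of t 1 "1 + cmod Y"] by simp
  then have "(1 + cmod X) ^ d \<le> (2 * (1 + cmod Y)) ^ d" by (intro power_mono) auto
  also have "\<dots> = 2 ^ d * (1 + cmod Y) ^ d" by (simp only: power_mult_distrib)
  also have "\<dots> \<le> 2 ^ d * (Cp * (1 + cmod (h Y)))" using power_le_Cp[of Y] by (intro mult_left_mono) auto
  finally show ?thesis by (simp add: mult_ac)
qed

lemma perturbed_step_close:
  assumes t: "0 \<le> t" "t \<le> 1" and e: "0 \<le> \<eta>" "\<eta> \<le> 1"
    and XY: "cmod (X - Y) \<le> t * (1 + cmod Y)"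
    and th: "cmod (\<theta> - 1) \<le> \<eta>" and E: "cmod E \<le> \<eta> * (1 + cmod X) ^ d"
  shows "cmod (\<theta> * h X + E - h Y) \<le> M * (t + \<eta>) * (1 + cmod (h Y))"
proof -
  let ?hY = "1 + cmod (h Y)"
  have hd: "cmod (h X - h Y) \<le> C * Cp * t * ?hY" by (rule h_relative_lipschitz[OF t XY])
  have hX: "cmod (h X) \<le> (1 + C * Cp) * ?hY"
  proof -
    have "cmod (h X) \<le> cmod (h Y) + cmod (h X - h Y)" by (metis norm_triangle_sub add.commute)
    moreover have "C * Cp * t * ?hY \<le> C * Cp * 1 * ?hY"
      using t C0 Cp_ge_1 by (intro mult_right_mono mult_left_mono) auto
    ultimately show ?thesis using hd by (simp add: algebra_simps)
  qed
  have EX: "cmod E \<le> \<eta> * (2 ^ d * Cp) * ?hY"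
    using E mult_left_mono[OF power_le_Cp_near[OF t XY] e(1)] by (simp add: mult_ac)
  have "cmod (\<theta> * h X + E - h Y) = cmod ((\<theta> - 1) * h X + (h X - h Y) + E)" by (simp add: algebra_simps)
  also have "\<dots> \<le> cmod (\<theta> - 1) * cmod (h X) + cmod (h X - h Y) + cmod E"
    using norm_triangle_ineq[of "(\<theta> - 1) * h X + (h X - h Y)" E]
      norm_triangle_ineq[of "(\<theta> - 1) * h X" "h X - h Y"] unfolding norm_mult by linarith
  also have "\<dots> \<le> \<eta> * ((1 + C * Cp) * ?hY) + C * Cp * t * ?hY + \<eta> * (2 ^ d * Cp) * ?hY"
    using mult_mono[OF th hX] e hd EX by simp
  also have "\<dots> = (C * Cp * t + \<eta> * M) * ?hY" unfolding M_def by (simp add: algebra_simps)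
  also have "\<dots> \<le> M * (t + \<eta>) * ?hY"
  proof -
    have "C * Cp * t \<le> M * t" using t C0 Cp_ge_1 unfolding M_def by (intro mult_right_mono) auto
    then show ?thesis by (intro mult_right_mono) (auto simp: algebra_simps)
  qed
  finally show ?thesis .
qed

lemma perturbed_orbit_close:
  assumes e: "0 \<le> \<eta>" "\<eta> * (2 * M) ^ N \<le> 1"
    and th: "\<And>n. cmod (\<theta> n - 1) \<le> \<eta>"
    and E: "\<And>n x. cmod (E n x) \<le> \<eta> * (1 + cmod x) ^ d"
    and X: "\<And>n. X (Suc n) = \<theta> n * h (X n) + E n (X n)"
  shows "n \<le> N \<Longrightarrow> cmod (X n - (h ^^ n) (X 0)) \<le> \<eta> * (2 * M) ^ n * (1 + cmod ((h ^^ n) (X 0)))"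
proof (induction n)
  case (Suc n)
  have M2: "2 * M \<ge> 1" using M_ge_1 by simp
  have t1: "\<eta> * (2 * M) ^ n \<le> 1"
    using e M2 Suc.prems mult_left_mono[OF power_increasing[of n N "2 * M"], of \<eta>] by simp
  have eta_le: "\<eta> \<le> \<eta> * (2 * M) ^ n"
    using mult_left_mono[OF one_le_power[OF M2] e(1), of n] by simp
  have "cmod (\<theta> n * h (X n) + E n (X n) - h ((h ^^ n) (X 0)))
      \<le> M * (\<eta> * (2 * M) ^ n + \<eta>) * (1 + cmod (h ((h ^^ n) (X 0))))"
    using Suc e M2 eta_le t1 by (intro perturbed_step_close th E) auto
  also have "\<dots> \<le> \<eta> * (2 * M) ^ Suc n * (1 + cmod (h ((h ^^ n) (X 0))))"
  proof (intro mult_right_mono)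
    have "M * (\<eta> * (2 * M) ^ n + \<eta>) \<le> M * (2 * (\<eta> * (2 * M) ^ n))"
      using eta_le M_ge_1 by (intro mult_left_mono) auto
    then show "M * (\<eta> * (2 * M) ^ n + \<eta>) \<le> \<eta> * (2 * M) ^ Suc n" by (simp add: mult_ac)
  qed auto
  finally show ?case using X by simp
qed (use e in simp)

text \<open>Quantitative stability of the escape rate: comparing both escape rates with
  their \<open>N\<close>-th terms and those terms with each other.\<close>

lemma perturbed_escape_rate_close:
  assumes e: "0 \<le> \<eta>" "\<eta> * ((B + 1) * Cp) \<le> 1/4" "\<eta> * (2 * M) ^ N \<le> 1/4"
    and th: "\<And>n. cmod (\<theta> n - 1) \<le> \<eta>"
    and E: "\<And>n x. cmod (E n x) \<le> \<eta> * (1 + cmod x) ^ d"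
    and X: "\<And>n. X (Suc n) = \<theta> n * h (X n) + E n (X n)"
  shows "\<bar>escape_rate d (\<lambda>k. cmod (X k)) - G_green h d (X 0)\<bar>
           \<le> 2 * (Kh + 1) / real d ^ N + 4 * (\<eta> * (2 * M) ^ N)"
proof -
  define Y where "Y = (\<lambda>k. (h ^^ k) (X 0))"
  have K0: "Kh + 1 \<ge> 0" using Kh_nonneg by simp
  have approx_X: "\<bar>escape_rate d (\<lambda>k. cmod (X k)) - log_plus (cmod (X N)) / real d ^ N\<bar>
                   \<le> (Kh + 1) / real d ^ N"
  proof (rule escape_rate_approx[OF d2 K0])
    show "\<bar>log_plus (cmod (X (Suc n))) - real d * log_plus (cmod (X n))\<bar> \<le> Kh + 1" for n
      unfolding X by (rule log_plus_perturbed_step[OF e(1,2) th E])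
  qed
  have approx_Y: "\<bar>escape_rate d (\<lambda>k. cmod (Y k)) - log_plus (cmod (Y N)) / real d ^ N\<bar>
                   \<le> (Kh + 1) / real d ^ N"
  proof (rule escape_rate_approx[OF d2 K0])
    show "\<bar>log_plus (cmod (Y (Suc n))) - real d * log_plus (cmod (Y n))\<bar> \<le> Kh + 1" for n
      using log_plus_step[of "Y n"] unfolding Y_def by simp
  qed
  have "cmod (X N - Y N) \<le> \<eta> * (2 * M) ^ N * (1 + cmod (Y N))"
    unfolding Y_def
  proof (rule perturbed_orbit_close[of \<eta> N \<theta> E X N])
    show "\<eta> * (2 * M) ^ N \<le> 1" using e(3) by simp
  qed (use e(1) th E X in auto)
  then have "\<bar>log_plus (cmod (X N)) - log_plus (cmod (Y N))\<bar> \<le> 4 * (\<eta> * (2 * M) ^ N)"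
    using e M_ge_1 by (intro log_plus_rel) auto
  moreover have "\<bar>log_plus (cmod (X N)) / real d ^ N - log_plus (cmod (Y N)) / real d ^ N\<bar>
                  \<le> \<bar>log_plus (cmod (X N)) - log_plus (cmod (Y N))\<bar> / 1"
    unfolding diff_divide_distrib[symmetric] abs_divide using d2
    by (intro divide_left_mono) (auto simp: one_le_power)
  ultimately have "\<bar>log_plus (cmod (X N)) / real d ^ N - log_plus (cmod (Y N)) / real d ^ N\<bar>
                    \<le> 4 * (\<eta> * (2 * M) ^ N)"
    by simp
  moreover have "G_green h d (X 0) = escape_rate d (\<lambda>k. cmod (Y k))"
    unfolding G_green_def escape_rate_def Y_def ..
  ultimately show ?thesis using approx_X approx_Y by linarith
qed

theorem perturbed_escape_rate_tendsto_green:
  assumes eps: "\<epsilon> > 0"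
  shows "\<exists>\<eta>>0. \<forall>\<theta> E X. (\<forall>n. cmod (\<theta> n - 1) \<le> \<eta>) \<longrightarrow> (\<forall>n x. cmod (E n x) \<le> \<eta> * (1 + cmod x) ^ d)
     \<longrightarrow> (\<forall>n. X (Suc n) = \<theta> n * h (X n) + E n (X n))
     \<longrightarrow> \<bar>escape_rate d (\<lambda>k. cmod (X k)) - G_green h d (X 0)\<bar> < \<epsilon>"
proof -
  obtain N where N: "4 * (Kh + 1) / \<epsilon> < real d ^ N"
    using real_arch_pow[of "real d" "4 * (Kh + 1) / \<epsilon>"] d2 by auto
  then have KN: "2 * (Kh + 1) / real d ^ N < \<epsilon> / 2"
    using eps d2 by (simp add: field_simps)
  have BC: "(B + 1) * Cp \<ge> 1" using B1 Cp_ge_1 mult_mono[of 1 "B + 1" 1 Cp] by simp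
  have MN: "(2 * M) ^ N \<ge> 1" using M_ge_1 by (intro one_le_power) simp
  define \<eta> where "\<eta> = min (1 / (4 * ((B + 1) * Cp))) (min (1 / (4 * (2 * M) ^ N)) (\<epsilon> / (16 * (2 * M) ^ N)))"
  have e0: "\<eta> > 0" unfolding \<eta>_def using eps MN BC by auto
  have e1: "\<eta> * ((B + 1) * Cp) \<le> 1/4"
  proof -
    have "\<eta> * ((B + 1) * Cp) \<le> (1 / (4 * ((B + 1) * Cp))) * ((B + 1) * Cp)"
      using BC unfolding \<eta>_def by (intro mult_right_mono) auto
    also have "\<dots> = 1/4" using BC by (simp add: field_simps)
    finally show ?thesis .
  qed
  have "\<eta> * (2 * M) ^ N \<le> (1 / (4 * (2 * M) ^ N)) * (2 * M) ^ N"
    using MN unfolding \<eta>_def by (intro mult_right_mono) auto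
  moreover have "\<eta> * (2 * M) ^ N \<le> (\<epsilon> / (16 * (2 * M) ^ N)) * (2 * M) ^ N"
    using MN unfolding \<eta>_def by (intro mult_right_mono) auto
  moreover have "M \<noteq> 0" using M_ge_1 by simp
  ultimately have e2: "\<eta> * (2 * M) ^ N \<le> 1/4" "\<eta> * (2 * M) ^ N \<le> \<epsilon> / 16"
    using MN by simp_all
  show ?thesis
  proof (intro exI[of _ \<eta>] conjI e0 allI impI)
    fix \<theta> E X
    assume "\<forall>n. cmod (\<theta> n - 1) \<le> \<eta>" "\<forall>n x. cmod (E n x) \<le> \<eta> * (1 + cmod x) ^ d"
      "\<forall>n. X (Suc n) = \<theta> n * h (X n) + E n (X n)"
    then have "\<bar>escape_rate d (\<lambda>k. cmod (X k)) - G_green h d (X 0)\<bar>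
                \<le> 2 * (Kh + 1) / real d ^ N + 4 * (\<eta> * (2 * M) ^ N)"
      using e0 e1 e2(1) by (intro perturbed_escape_rate_close) auto
    then show "\<bar>escape_rate d (\<lambda>k. cmod (X k)) - G_green h d (X 0)\<bar> < \<epsilon>"
      using e2(2) KN by linarith
  qed
qed

end

lemma norm_power_diff_le:
  fixes X Y :: complex
  assumes "cmod X \<le> R" "cmod Y \<le> R"
  shows "cmod (X ^ Suc k - Y ^ Suc k) \<le> real (Suc k) * cmod (X - Y) * R ^ k"
proof (induction k)
  case (Suc k)
  have R0: "R \<ge> 0" using assms(1) norm_ge_zero order_trans by blast
  have "X ^ Suc (Suc k) - Y ^ Suc (Suc k) = X * (X ^ Suc k - Y ^ Suc k) + (X - Y) * Y ^ Suc k"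
    by (simp add: algebra_simps)
  then have "cmod (X ^ Suc (Suc k) - Y ^ Suc (Suc k))
      \<le> cmod X * cmod (X ^ Suc k - Y ^ Suc k) + cmod (X - Y) * cmod Y ^ Suc k"
    by (metis norm_mult norm_power norm_triangle_ineq)
  also have "\<dots> \<le> R * (real (Suc k) * cmod (X - Y) * R ^ k) + cmod (X - Y) * R ^ Suc k"
    using Suc.IH assms R0 by (intro add_mono mult_mono power_mono mult_left_mono) auto
  also have "\<dots> = real (Suc (Suc k)) * cmod (X - Y) * R ^ Suc k" by (simp add: algebra_simps)
  finally show ?case .
qed simp

lemma norm_power_diff_le_uniform:
  fixes X Y :: complex
  assumes "cmod X \<le> R" "cmod Y \<le> R" "R \<ge> 1" "m \<le> D"
  shows "cmod (X ^ m - Y ^ m) \<le> real D * cmod (X - Y) * R ^ (D - 1)"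
proof (cases m)
  case (Suc k)
  have "cmod (X ^ m - Y ^ m) \<le> real (Suc k) * cmod (X - Y) * R ^ k"
    using norm_power_diff_le[OF assms(1,2)] Suc by simp
  also have "\<dots> \<le> real D * cmod (X - Y) * R ^ (D - 1)"
    using assms Suc by (intro mult_mono power_increasing) auto
  finally show ?thesis .
qed (use assms in simp)

lemma norm_monomial_sum_le:
  fixes c :: "nat \<Rightarrow> nat \<Rightarrow> complex"
  assumes "\<And>n m. (n, m) \<in> S \<Longrightarrow> m \<le> D"
  shows "cmod (\<Sum>(n, m)\<in>S. c n m * x ^ m) \<le> (\<Sum>(n, m)\<in>S. cmod (c n m)) * (1 + cmod x) ^ D"
proof -
  have "cmod (\<Sum>(n, m)\<in>S. c n m * x ^ m) \<le> (\<Sum>(n, m)\<in>S. cmod (c n m * x ^ m))"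
    by (rule norm_sum[THEN order_trans]) (simp add: case_prod_unfold)
  also have "\<dots> \<le> (\<Sum>(n, m)\<in>S. cmod (c n m) * (1 + cmod x) ^ D)"
  proof (rule sum_mono, clarify)
    fix n m assume "(n, m) \<in> S"
    then have "cmod x ^ m \<le> (1 + cmod x) ^ D"
      using assms power_mono[of "cmod x" "1 + cmod x" m] power_increasing[of m D "1 + cmod x"]
      by fastforce
    then show "cmod (c n m * x ^ m) \<le> cmod (c n m) * (1 + cmod x) ^ D"
      by (simp add: norm_mult norm_power mult_left_mono)
  qed
  also have "\<dots> = (\<Sum>(n, m)\<in>S. cmod (c n m)) * (1 + cmod x) ^ D"
    by (simp add: sum_distrib_right case_prod_unfold)
  finally show ?thesis .
qed

lemma norm_monomial_sum_diff_le:
  fixes c :: "nat \<Rightarrow> nat \<Rightarrow> complex"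
  assumes "\<And>n m. (n, m) \<in> S \<Longrightarrow> m \<le> D" "D \<ge> 1"
    and t: "0 \<le> t" "t \<le> 1" and XY: "cmod (X - Y) \<le> t * (1 + cmod Y)"
  shows "cmod ((\<Sum>(n, m)\<in>S. c n m * X ^ m) - (\<Sum>(n, m)\<in>S. c n m * Y ^ m))
         \<le> ((\<Sum>(n, m)\<in>S. cmod (c n m)) * real D * 3 ^ D) * t * (1 + cmod Y) ^ D"
proof -
  define R where "R = 3 * (1 + cmod Y)"
  have "cmod X \<le> cmod Y + cmod (X - Y)" by (metis norm_triangle_sub add.commute)
  moreover have "t * (1 + cmod Y) \<le> 1 + cmod Y" using t mult_right_mono[of t 1 "1 + cmod Y"] by simp
  ultimately have "cmod X \<le> 1 + 2 * cmod Y" using XY by linarith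
  then have X: "cmod X \<le> R" unfolding R_def by (smt (verit) norm_ge_zero)
  have Y: "cmod Y \<le> R" and R1: "R \<ge> 1" unfolding R_def by simp_all
  have key: "real D * cmod (X - Y) * R ^ (D - 1) \<le> real D * 3 ^ D * t * (1 + cmod Y) ^ D"
  proof -
    have "real D * cmod (X - Y) * R ^ (D - 1) \<le> real D * (t * (1 + cmod Y)) * R ^ (D - 1)"
      using XY by (intro mult_right_mono mult_left_mono) (auto simp: R_def)
    also have "\<dots> = real D * t * 3 ^ (D - 1) * ((1 + cmod Y) * (1 + cmod Y) ^ (D - 1))"
      unfolding R_def power_mult_distrib by (simp only: mult_ac)
    also have "(1 + cmod Y) * (1 + cmod Y) ^ (D - 1) = (1 + cmod Y) ^ D"
      using assms(2) by (metis Suc_diff_1 less_le_trans zero_less_one power_Suc)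
    also have "real D * t * 3 ^ (D - 1) * (1 + cmod Y) ^ D \<le> real D * t * 3 ^ D * (1 + cmod Y) ^ D"
      using t by (intro mult_right_mono mult_left_mono power_increasing) auto
    finally show ?thesis by (simp add: mult_ac)
  qed
  have "cmod ((\<Sum>(n, m)\<in>S. c n m * X ^ m) - (\<Sum>(n, m)\<in>S. c n m * Y ^ m))
      = cmod (\<Sum>(n, m)\<in>S. c n m * (X ^ m - Y ^ m))"
    by (simp add: sum_subtractf[symmetric] case_prod_unfold algebra_simps)
  also have "\<dots> \<le> (\<Sum>(n, m)\<in>S. cmod (c n m * (X ^ m - Y ^ m)))"
    by (rule norm_sum[THEN order_trans]) (simp add: case_prod_unfold)
  also have "\<dots> \<le> (\<Sum>(n, m)\<in>S. cmod (c n m) * (real D * 3 ^ D * t * (1 + cmod Y) ^ D))"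
  proof (rule sum_mono, clarify)
    fix n m assume "(n, m) \<in> S"
    then have "cmod (X ^ m - Y ^ m) \<le> real D * 3 ^ D * t * (1 + cmod Y) ^ D"
      using norm_power_diff_le_uniform[OF X Y R1, of m D] assms(1)[of n m] key by simp
    then show "cmod (c n m * (X ^ m - Y ^ m)) \<le> cmod (c n m) * (real D * 3 ^ D * t * (1 + cmod Y) ^ D)"
      by (simp add: norm_mult mult_left_mono)
  qed
  also have "\<dots> = (\<Sum>(n, m)\<in>S. cmod (c n m)) * (real D * 3 ^ D * t * (1 + cmod Y) ^ D)"
    by (simp add: sum_distrib_right case_prod_unfold)
  finally show ?thesis by (simp only: mult_ac)
qed

lemma dominant_power_lower_bound:
  fixes g :: "complex \<Rightarrow> complex"
  assumes d: "d \<ge> 1" and S0: "S \<ge> 0" and g: "cmod (g x) \<le> S * (1 + cmod x) ^ (d - 1)"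
    and x: "cmod x \<ge> 1 + S * 2 ^ d"
  shows "cmod (x ^ d + g x) \<ge> cmod x ^ d / 2"
proof -
  have x1: "cmod x \<ge> 1" using x S0 by (smt (verit) mult_nonneg_nonneg zero_le_power)
  have "cmod (g x) \<le> S * (2 * cmod x) ^ (d - 1)"
    using g x1 S0 mult_left_mono[OF power_mono[of "1 + cmod x" "2 * cmod x" "d - 1"] S0] by simp
  also have "\<dots> = (S * 2 ^ d / 2) * cmod x ^ (d - 1)"
    using d by (simp add: power_mult_distrib power_diff)
  also have "\<dots> \<le> (cmod x / 2) * cmod x ^ (d - 1)"
    using x by (intro mult_right_mono) auto
  also have "\<dots> = cmod x ^ d / 2"
    using d by (simp add: power_eq_if[of _ d] split: if_splits)
  finally have "cmod (g x) \<le> cmod x ^ d / 2" .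
  moreover have "cmod (x ^ d) \<le> cmod (x ^ d + g x) + cmod (g x)"
    using norm_triangle_ineq4[of "x ^ d + g x" "g x"] by simp
  ultimately show ?thesis by (simp add: norm_power)
qed

lemma monic_monomial_sum_regular:
  fixes c :: "nat \<Rightarrow> nat \<Rightarrow> complex"
  assumes fin: "finite T" and T_deg: "\<And>n m. (n, m) \<in> T \<Longrightarrow> m \<le> d"
    and top: "(\<gamma>, d) \<in> T" "c \<gamma> d = 1" and top_unique: "\<And>n. (n, d) \<in> T \<Longrightarrow> n = \<gamma>"
    and d2: "d \<ge> 2"
  shows "\<exists>B R1 C. green_regular (\<lambda>x. \<Sum>(n, m)\<in>T. c n m * x ^ m) d B R1 C"
proof -
  define h where "h = (\<lambda>x. \<Sum>(n, m)\<in>T. c n m * x ^ m)"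
  define S where "S = (\<Sum>(n, m)\<in>T. cmod (c n m))"
  define T' where "T' = T - {(\<gamma>, d)}"
  define S' where "S' = (\<Sum>(n, m)\<in>T'. cmod (c n m))"
  define R1 where "R1 = 1 + S' * 2 ^ d"
  have S0: "S \<ge> 0" and S'0: "S' \<ge> 0"
    unfolding S_def S'_def by (auto intro: sum_nonneg simp: case_prod_unfold)
  have T'_deg: "m \<le> d - 1" if "(n, m) \<in> T'" for n m
  proof -
    have "m \<le> d" "m \<noteq> d" using that T_deg top_unique unfolding T'_def by auto
    then show ?thesis by simp
  qed
  have h_split: "h x = x ^ d + (\<Sum>(n, m)\<in>T'. c n m * x ^ m)" for x
    unfolding h_def T'_def using sum.remove[OF fin top(1), of "\<lambda>(n, m). c n m * x ^ m"] top(2) by simp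
  have R1: "R1 \<ge> 1" unfolding R1_def using S'0 by simp
  have upper: "cmod (h x) \<le> (1 + S) * (1 + cmod x) ^ d" for x
  proof -
    have "cmod (h x) \<le> S * (1 + cmod x) ^ d"
      unfolding h_def S_def by (rule norm_monomial_sum_le[OF T_deg])
    also have "\<dots> \<le> (1 + S) * (1 + cmod x) ^ d" by (intro mult_right_mono) auto
    finally show ?thesis .
  qed
  have lower: "cmod (h x) \<ge> cmod x ^ d / 2" if x: "cmod x \<ge> R1" for x
  proof -
    have "cmod (\<Sum>(n, m)\<in>T'. c n m * x ^ m) \<le> S' * (1 + cmod x) ^ (d - 1)"
      unfolding S'_def by (rule norm_monomial_sum_le[OF T'_deg])
    then show ?thesis
      unfolding h_split using d2 S'0 x unfolding R1_def by (intro dominant_power_lower_bound) auto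
  qed
  have lipschitz: "cmod (h X - h Y) \<le> (S * real d * 3 ^ d) * t * (1 + cmod Y) ^ d"
    if "0 \<le> t" "t \<le> 1" "cmod (X - Y) \<le> t * (1 + cmod Y)" for X Y t
    unfolding h_def S_def using norm_monomial_sum_diff_le[OF T_deg _ that] d2 by simp
  have "green_regular h d (1 + S) R1 (S * real d * 3 ^ d)"
    by (rule green_regular.intro[OF d2 _ R1 _ upper lower lipschitz]) (use S0 in auto)
  then show ?thesis unfolding h_def by blast
qed

lemma monic_poly_near_leading_term:
  fixes p :: "complex poly"
  assumes monic: "lead_coeff p = 1" and deg: "degree p = Suc k"
  obtains S where "S \<ge> 0" "\<And>u. cmod u \<ge> 1 \<Longrightarrow> cmod (poly p u - u ^ Suc k) \<le> S * cmod u ^ k"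
proof -
  define S where "S = (\<Sum>i\<le>k. cmod (coeff p i))"
  have "cmod (poly p u - u ^ Suc k) \<le> S * cmod u ^ k" if u: "cmod u \<ge> 1" for u
  proof -
    have "poly p u = (\<Sum>i\<le>k. coeff p i * u ^ i) + coeff p (Suc k) * u ^ Suc k"
      unfolding poly_altdef using deg by simp
    then have "poly p u - u ^ Suc k = (\<Sum>i\<le>k. coeff p i * u ^ i)" using monic deg by simp
    also have "cmod \<dots> \<le> (\<Sum>i\<le>k. cmod (coeff p i * u ^ i))" by (rule norm_sum)
    also have "\<dots> \<le> (\<Sum>i\<le>k. cmod (coeff p i) * cmod u ^ k)"
      using u by (intro sum_mono) (auto simp: norm_mult norm_power intro!: mult_left_mono power_increasing)
    finally show ?thesis unfolding S_def by (simp add: sum_distrib_right)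
  qed
  moreover have "S \<ge> 0" unfolding S_def by (intro sum_nonneg) auto
  ultimately show ?thesis using that by blast
qed

lemma monic_poly_escape:
  fixes p :: "complex poly"
  assumes monic: "lead_coeff p = 1" and deg: "degree p = \<delta>" and \<delta>2: "\<delta> \<ge> 2"
  obtains S where "S \<ge> 0"
    and "\<And>u. cmod u \<ge> 1 \<Longrightarrow> cmod (poly p u / u ^ \<delta> - 1) \<le> S / cmod u"
    and "\<And>z n. cmod z \<ge> max 2 (2 * S) \<Longrightarrow> cmod ((poly p ^^ n) z) \<ge> cmod z"
proof -
  obtain k where k: "\<delta> = Suc k" using \<delta>2 by (cases \<delta>) auto
  obtain S where S0: "S \<ge> 0" and near: "\<And>u. cmod u \<ge> 1 \<Longrightarrow> cmod (poly p u - u ^ \<delta>) \<le> S * cmod u ^ k"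
    using monic_poly_near_leading_term[OF monic deg[unfolded k]] k by blast
  have split: "cmod u ^ \<delta> = cmod u * cmod u ^ k" for u unfolding k by simp
  have ratio: "cmod (poly p u / u ^ \<delta> - 1) \<le> S / cmod u" if u: "cmod u \<ge> 1" for u
  proof -
    have u0: "u \<noteq> 0" using u by auto
    have "poly p u / u ^ \<delta> - 1 = (poly p u - u ^ \<delta>) / u ^ \<delta>" using u0 by (simp add: field_simps)
    then have "cmod (poly p u / u ^ \<delta> - 1) = cmod (poly p u - u ^ \<delta>) / (cmod u * cmod u ^ k)"
      by (simp add: norm_divide norm_power split[symmetric])
    also have "\<dots> \<le> S * cmod u ^ k / (cmod u * cmod u ^ k)"
      using near[OF u] u0 by (intro divide_right_mono) auto
    also have "\<dots> = S / cmod u" using u0 by simp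
    finally show ?thesis .
  qed
  have grow: "cmod (poly p u) \<ge> cmod u" if u: "cmod u \<ge> max 2 (2 * S)" for u
  proof -
    have u1: "cmod u \<ge> 1" using u by simp
    have "cmod (u ^ \<delta>) \<le> cmod (poly p u) + cmod (poly p u - u ^ \<delta>)"
      using norm_triangle_ineq4[of "poly p u" "poly p u - u ^ \<delta>"] by simp
    then have "(cmod u - S) * cmod u ^ k \<le> cmod (poly p u)"
      using near[OF u1] split[of u] by (simp add: norm_power algebra_simps)
    moreover have "1 * cmod u ^ 1 \<le> (cmod u - S) * cmod u ^ k"
      using u u1 k \<delta>2 by (intro mult_mono power_increasing) auto
    ultimately show ?thesis by simp
  qed
  have "cmod ((poly p ^^ n) z) \<ge> cmod z" if z: "cmod z \<ge> max 2 (2 * S)" for z n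
  proof (induction n)
    case (Suc n)
    then have "cmod (poly p ((poly p ^^ n) z)) \<ge> cmod ((poly p ^^ n) z)"
      using z by (intro grow) linarith
    then show ?case using Suc by simp
  qed simp
  then show ?thesis using that S0 ratio by blast
qed

text \<open>The correction term is the principal logarithm of a number close to 1, which is
  what makes the rescaling factors \<open>(p^n z)^(-\<alpha>)\<close> compatible along the orbit.\<close>

primrec orbit_log :: "complex poly \<Rightarrow> nat \<Rightarrow> complex \<Rightarrow> nat \<Rightarrow> complex" where
  "orbit_log p \<delta> z 0 = Ln z"
| "orbit_log p \<delta> z (Suc n) =
     of_nat \<delta> * orbit_log p \<delta> z n + Ln ((poly p ^^ Suc n) z / ((poly p ^^ n) z) ^ \<delta>)"

lemma exp_orbit_log:
  assumes "\<And>n. (poly p ^^ n) z \<noteq> 0"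
  shows "exp (orbit_log p \<delta> z n) = (poly p ^^ n) z"
proof (induction n)
  case (Suc n)
  have "exp (orbit_log p \<delta> z (Suc n))
      = exp (orbit_log p \<delta> z n) ^ \<delta> * ((poly p ^^ Suc n) z / ((poly p ^^ n) z) ^ \<delta>)"
    using assms[of "Suc n"] assms[of n] by (simp add: exp_add exp_of_nat_mult del: funpow.simps)
  also have "\<dots> = (poly p ^^ Suc n) z" using Suc.IH assms[of n] by (simp del: funpow.simps)
  finally show ?case .
qed (use assms[of 0] in simp)

lemma Re_eq_ln_norm_exp: "exp L = (Z::complex) \<Longrightarrow> Z \<noteq> 0 \<Longrightarrow> Re L = ln (cmod Z)"
  by (metis norm_exp_eq_Re ln_exp)

lemma Qiter_Suc: "Qiter p a (Suc k) z w = qeval a ((poly p ^^ k) z) (Qiter p a k z w)"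
proof (induction k arbitrary: z w)
  case (Suc k)
  have "Qiter p a (Suc (Suc k)) z w = Qiter p a (Suc k) (poly p z) (qeval a z w)" by simp
  also have "\<dots> = qeval a ((poly p ^^ k) (poly p z)) (Qiter p a k (poly p z) (qeval a z w))"
    by (rule Suc.IH)
  finally show ?case by (simp add: funpow_Suc_right del: funpow.simps)
qed simp

lemma principal_power_near_one:
  fixes \<alpha> \<eta> :: real
  assumes "\<eta> > 0"
  obtains \<rho> where "\<rho> > 0" "\<And>u. cmod (u - 1) < \<rho> \<Longrightarrow> cmod (exp (- of_real \<alpha> * Ln u) - 1) < \<eta>"
proof -
  have "isCont (\<lambda>u. exp (- of_real \<alpha> * Ln u)) 1"
    by (intro continuous_intros) (auto simp: nonpos_Reals_def)
  then obtain \<rho> where "\<rho> > 0" "\<And>u. dist u 1 < \<rho> \<Longrightarrow> dist (exp (- of_real \<alpha> * Ln u)) 1 < \<eta>"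
    using assms unfolding continuous_at_eps_delta by fastforce
  then show ?thesis using that by (auto simp: dist_norm)
qed

text \<open>With \<open>\<lambda> = exp(-\<alpha> L)\<close> a branch of
  \<open>Z^(-\<alpha>)\<close>, the monomial \<open>Z^j x^m\<close> becomes \<open>\<lambda>^(d-m) Z^(j-\<gamma>)\<close> times a common
  factor; this factor is exactly 1 on the terms of maximal weight and has modulus
  \<open>|Z|^(j - \<alpha>(d-m) - \<gamma>)\<close> in general.\<close>

lemma rescaled_monomial:
  fixes c x Z l l' :: complex
  assumes l: "l \<noteq> 0" and Z: "Z \<noteq> 0" and m: "m \<le> d"
  shows "c * Z ^ j * (x / l) ^ m * l'
       = (Z ^ \<gamma> * l' / l ^ d) * (c * x ^ m * (Z ^ j * l ^ (d - m) / Z ^ \<gamma>))"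
proof -
  have ld: "l ^ d = l ^ m * l ^ (d - m)" using m by (simp add: power_add[symmetric])
  show ?thesis unfolding ld using l Z by (simp add: field_simps power_divide)
qed

lemma top_weight_scale:
  fixes L Z :: complex and \<alpha> :: real
  assumes ZL: "exp L = Z" and j: "j \<le> \<gamma>" and m: "m \<le> d"
    and w: "real \<gamma> - real j = - \<alpha> * (real d - real m)"
  shows "Z ^ j * exp (- of_real \<alpha> * L) ^ (d - m) = Z ^ \<gamma>"
proof -
  have "real (d - m) * (- \<alpha>) = real (\<gamma> - j)"
    using w j m by (simp add: of_nat_diff algebra_simps)
  then have "(of_nat (d - m) :: complex) * (- of_real \<alpha>) = of_nat (\<gamma> - j)"
    by (metis of_real_mult of_real_minus of_real_of_nat_eq)
  then have "exp (- of_real \<alpha> * L) ^ (d - m) = Z ^ (\<gamma> - j)"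
    using ZL by (metis exp_of_nat_mult mult.assoc)
  then show ?thesis using j by (simp add: power_add[symmetric])
qed

lemma norm_weight_scale:
  fixes L Z :: complex and \<alpha> :: real
  assumes ZL: "exp L = Z" and Z: "Z \<noteq> 0" and m: "m \<le> d"
  shows "cmod (Z ^ j * exp (- of_real \<alpha> * L) ^ (d - m) / Z ^ \<gamma>)
       = cmod Z powr (real j - \<alpha> * (real d - real m) - real \<gamma>)"
proof -
  have Zp: "cmod Z > 0" using Z by simp
  have "cmod (exp (- of_real \<alpha> * L) ^ (d - m)) = exp (real (d - m) * (- \<alpha> * ln (cmod Z)))"
    by (simp add: norm_power Re_eq_ln_norm_exp[OF ZL Z] exp_of_nat_mult[symmetric])
  moreover have "cmod (Z ^ k) = exp (real k * ln (cmod Z))" for k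
    using Zp by (simp add: norm_power exp_of_nat_mult)
  ultimately have "cmod (Z ^ j * exp (- of_real \<alpha> * L) ^ (d - m) / Z ^ \<gamma>)
      = exp (real j * ln (cmod Z)) * exp (real (d - m) * (- \<alpha> * ln (cmod Z))) / exp (real \<gamma> * ln (cmod Z))"
    by (simp only: norm_mult norm_divide)
  also have "\<dots> = exp ((real j - \<alpha> * (real d - real m) - real \<gamma>) * ln (cmod Z))"
    using m by (simp add: exp_add[symmetric] exp_diff[symmetric] of_nat_diff algebra_simps)
  also have "\<dots> = cmod Z powr (real j - \<alpha> * (real d - real m) - real \<gamma>)"
    using Zp by (simp add: powr_def)
  finally show ?thesis .
qed

text \<open>The rescaling factor produced by the leading monomial \<open>z^\<gamma> w^d\<close>: the multiplier
  \<open>\<theta> = r^(-\<alpha>)\<close>, where \<open>r = p(Z)/Z^\<delta>\<close>.  This uses the weight relation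
  \<open>\<gamma> + \<alpha> d = \<alpha> \<delta>\<close>, i.e. \<open>\<alpha> = \<gamma> / (\<delta> - d)\<close>.\<close>

lemma leading_rescaling_factor:
  fixes L r :: complex and \<alpha> :: real
  assumes ZL: "exp L = Z" and w: "real \<gamma> + \<alpha> * real d = \<alpha> * real \<delta>"
  shows "Z ^ \<gamma> * exp (- of_real \<alpha> * (of_nat \<delta> * L + Ln r)) / exp (- of_real \<alpha> * L) ^ d
       = exp (- of_real \<alpha> * Ln r)"
proof -
  have wc: "(of_nat \<gamma> :: complex) + of_real \<alpha> * of_nat d = of_real \<alpha> * of_nat \<delta>"
    using arg_cong[OF w, of "of_real :: real \<Rightarrow> complex"] by simp
  have "Z ^ \<gamma> * exp (- of_real \<alpha> * (of_nat \<delta> * L + Ln r)) / exp (- of_real \<alpha> * L) ^ d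
     = exp (of_nat \<gamma> * L + (- of_real \<alpha> * (of_nat \<delta> * L + Ln r)) - of_nat d * (- of_real \<alpha> * L))"
    using ZL by (simp only: exp_add exp_diff exp_of_nat_mult)
  also have "of_nat \<gamma> * L + (- of_real \<alpha> * (of_nat \<delta> * L + Ln r)) - of_nat d * (- of_real \<alpha> * L)
      = (of_nat \<gamma> + of_real \<alpha> * of_nat d - of_real \<alpha> * of_nat \<delta>) * L - of_real \<alpha> * Ln r"
    by (simp add: algebra_simps)
  finally show ?thesis using wc by simp
qed

locale skew_product =
  fixes p :: "complex poly" and a :: "nat \<Rightarrow> nat \<Rightarrow> complex"
    and \<delta> d \<gamma> :: nat
  assumes p_monic: "lead_coeff p = 1" and p_deg: "degree p = \<delta>" and \<delta>_ge: "\<delta> \<ge> 2"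
    and q_fin: "finite (supp2 a)"
    and q_degw: "\<And>n m. m > d \<Longrightarrow> a n m = 0"
    and d_ge: "d \<ge> 2"
    and b_monic: "a \<gamma> d = 1" and b_deg: "\<And>n. n > \<gamma> \<Longrightarrow> a n d = 0"
    and \<delta>_lt: "\<delta> < d" and \<gamma>_ge: "\<gamma> \<ge> 1"
    and alpha_eq: "alpha_exp a \<gamma> \<delta> d = real \<gamma> / (real \<delta> - real d)"
begin

definition "\<alpha> = alpha_exp a \<gamma> \<delta> d"
definition "top_terms = {(n, m). a n m \<noteq> 0 \<and> real n + \<alpha> * real m = real \<gamma> + \<alpha> * real d}"
definition "low_terms = supp2 a - top_terms"

abbreviation "h \<equiv> hpoly a \<alpha> \<gamma> d"

lemma weight_balance: "real \<gamma> + \<alpha> * real d = \<alpha> * real \<delta>"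
proof -
  have "\<alpha> * (real \<delta> - real d) = real \<gamma>" unfolding \<alpha>_def alpha_eq using \<delta>_lt by simp
  then show ?thesis by (simp add: algebra_simps)
qed

lemma supp_deg: "(n, m) \<in> supp2 a \<Longrightarrow> m \<le> d"
  using q_degw[of m n] by (force simp: supp2_def)

text \<open>Every monomial of \<open>q\<close> has weight at most \<open>\<gamma> + \<alpha> d\<close>: for \<open>m = d\<close> because \<open>b\<close> has
  degree \<open>\<gamma>\<close>, and for \<open>m < d\<close> because \<open>\<alpha>\<close> is the maximum in its definition.\<close>

lemma supp_weight:
  assumes nm: "(n, m) \<in> supp2 a" shows "real n + \<alpha> * real m \<le> real \<gamma> + \<alpha> * real d"
proof (cases "m = d")
  case True
  then have "n \<le> \<gamma>" using nm b_deg[of n] by (force simp: supp2_def)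
  then show ?thesis using True by simp
next
  case False
  then have md: "m < d" using supp_deg[OF nm] by simp
  define A where "A = {(real n - real \<gamma>) / (real d - real m) |n m. a n m \<noteq> 0 \<and> m < d}"
  have "A \<subseteq> (\<lambda>(n, m). (real n - real \<gamma>) / (real d - real m)) ` supp2 a"
    unfolding A_def supp2_def by auto
  then have "finite A" using q_fin by (meson finite_imageI finite_subset)
  moreover have "(real n - real \<gamma>) / (real d - real m) \<in> A"
    unfolding A_def using nm md by (auto simp: supp2_def)
  ultimately have "(real n - real \<gamma>) / (real d - real m) \<le> \<alpha>"
    unfolding \<alpha>_def alpha_exp_def A_def[symmetric] by (intro Max_ge) auto
  then show ?thesis using md by (simp add: divide_le_eq algebra_simps)
qed

lemma top_terms_sub: "top_terms \<subseteq> supp2 a"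
  unfolding top_terms_def supp2_def by auto

lemma top_terms_facts:
  assumes "(n, m) \<in> top_terms"
  shows "m \<le> d" "n \<le> \<gamma>" "real \<gamma> - real n = - \<alpha> * (real d - real m)"
proof -
  show md: "m \<le> d" using assms top_terms_sub supp_deg by auto
  have e: "real n + \<alpha> * real m = real \<gamma> + \<alpha> * real d" using assms unfolding top_terms_def by auto
  then show "real \<gamma> - real n = - \<alpha> * (real d - real m)" by (simp add: algebra_simps)
  have "\<alpha> < 0" unfolding \<alpha>_def alpha_eq using \<delta>_lt \<gamma>_ge by (simp add: divide_pos_neg)
  then have "\<alpha> * (real d - real m) \<le> 0" using md by (simp add: mult_nonpos_nonneg)
  then show "n \<le> \<gamma>" using e by (simp add: algebra_simps)
qed

lemma low_terms_gap:
  assumes "(n, m) \<in> low_terms"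
  shows "m \<le> d" "real n - \<alpha> * (real d - real m) - real \<gamma> < 0"
proof -
  have s: "(n, m) \<in> supp2 a" and nt: "(n, m) \<notin> top_terms" using assms unfolding low_terms_def by auto
  show "m \<le> d" using supp_deg[OF s] .
  have "real n + \<alpha> * real m \<noteq> real \<gamma> + \<alpha> * real d" using nt s unfolding top_terms_def supp2_def by auto
  then show "real n - \<alpha> * (real d - real m) - real \<gamma> < 0" using supp_weight[OF s] by (simp add: algebra_simps)
qed

text \<open>\<open>h\<close> is a polynomial of degree \<open>d\<close> whose only monomial of degree \<open>d\<close> is \<open>w^d\<close>.\<close>

lemma h_regular: "\<exists>B R1 C. green_regular h d B R1 C"
proof -
  have "h = (\<lambda>x. \<Sum>(n, m)\<in>top_terms. a n m * x ^ m)"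
    unfolding hpoly_def top_terms_def by simp
  moreover have "\<exists>B R1 C. green_regular (\<lambda>x. \<Sum>(n, m)\<in>top_terms. a n m * x ^ m) d B R1 C"
    using top_terms_facts(1) b_monic d_ge finite_subset[OF top_terms_sub q_fin]
    by (intro monic_monomial_sum_regular) (auto simp: top_terms_def)
  ultimately show ?thesis by simp
qed

text \<open>In the rescaled coordinate \<open>x = Z^(-\<alpha>) w\<close> (with \<open>Z^(-\<alpha>) = exp(-\<alpha> L)\<close>), one step of
  the skew product from the fibre over \<open>Z\<close> to the fibre over \<open>p(Z) = r Z^\<delta>\<close> reads
  \<open>x \<mapsto> r^(-\<alpha>) (h(x) + low_part(x))\<close>.\<close>

definition "low_part Z L x =
  (\<Sum>(n, m)\<in>low_terms. (a n m * (Z ^ n * exp (- of_real \<alpha> * L) ^ (d - m) / Z ^ \<gamma>)) * x ^ m)"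

lemma rescaled_step:
  fixes Z L r x :: complex
  assumes ZL: "exp L = Z" and Z: "Z \<noteq> 0"
  shows "qeval a Z (x / exp (- of_real \<alpha> * L)) * exp (- of_real \<alpha> * (of_nat \<delta> * L + Ln r))
       = exp (- of_real \<alpha> * Ln r) * h x + exp (- of_real \<alpha> * Ln r) * low_part Z L x"
proof -
  define l where "l = exp (- of_real \<alpha> * L)"
  define l' where "l' = exp (- of_real \<alpha> * (of_nat \<delta> * L + Ln r))"
  define \<theta> where "\<theta> = exp (- of_real \<alpha> * Ln r)"
  define c where "c = (\<lambda>n m. Z ^ n * l ^ (d - m) / Z ^ \<gamma>)"
  have l0: "l \<noteq> 0" unfolding l_def by simp
  have th: "\<theta> = Z ^ \<gamma> * l' / l ^ d"
    unfolding \<theta>_def l_def l'_def by (rule leading_rescaling_factor[OF ZL weight_balance, symmetric])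
  have c_top: "c n m = 1" if "(n, m) \<in> top_terms" for n m
    unfolding c_def l_def using top_weight_scale[OF ZL top_terms_facts(2,1,3)[OF that]] Z by simp
  have "qeval a Z (x / l) * l' = (\<Sum>(n, m)\<in>supp2 a. a n m * Z ^ n * (x / l) ^ m * l')"
    unfolding qeval_def by (simp add: sum_distrib_right case_prod_unfold)
  also have "\<dots> = (\<Sum>(n, m)\<in>supp2 a. \<theta> * (a n m * x ^ m * c n m))"
    unfolding th c_def using rescaled_monomial[OF l0 Z supp_deg]
    by (intro sum.cong refl) auto
  also have "\<dots> = (\<Sum>(n, m)\<in>low_terms. \<theta> * (a n m * x ^ m * c n m))
                 + (\<Sum>(n, m)\<in>top_terms. \<theta> * (a n m * x ^ m * c n m))"
    unfolding low_terms_def by (rule sum.subset_diff[OF top_terms_sub q_fin])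
  also have "(\<Sum>(n, m)\<in>top_terms. \<theta> * (a n m * x ^ m * c n m)) = \<theta> * h x"
    unfolding hpoly_def top_terms_def[symmetric] sum_distrib_left
    by (intro sum.cong refl) (auto simp: c_top)
  also have "(\<Sum>(n, m)\<in>low_terms. \<theta> * (a n m * x ^ m * c n m)) = \<theta> * low_part Z L x"
    unfolding low_part_def c_def l_def by (simp add: sum_distrib_left case_prod_unfold mult_ac)
  finally show ?thesis unfolding l_def l'_def \<theta>_def by (simp add: add.commute)
qed

text \<open>The lower-weight part carries negative powers of \<open>|Z|\<close>, so it is uniformly small
  relative to \<open>(1 + |x|)^d\<close> once \<open>|Z|\<close> is large.\<close>

lemma low_part_small:
  assumes "\<eta> > 0"
  obtains Rg where "\<And>Z L x. exp L = Z \<Longrightarrow> Z \<noteq> 0 \<Longrightarrow> cmod Z \<ge> Rg \<Longrightarrow>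
                      cmod (low_part Z L x) \<le> \<eta> * (1 + cmod x) ^ d"
proof -
  define e where "e = (\<lambda>q. real (fst q) - \<alpha> * (real d - real (snd q)) - real \<gamma>)"
  define bound where "bound = (\<lambda>r::real. \<Sum>q\<in>low_terms. cmod (a (fst q) (snd q)) * r powr e q)"
  have "(bound \<longlongrightarrow> (\<Sum>q\<in>low_terms. cmod (a (fst q) (snd q)) * 0)) at_top"
    unfolding bound_def e_def using low_terms_gap(2)
    by (intro tendsto_sum tendsto_mult tendsto_const tendsto_neg_powr filterlim_ident) auto
  then have "eventually (\<lambda>r. bound r < \<eta>) at_top"
    using assms by (intro order_tendstoD(2)) auto
  then obtain Rg where Rg: "\<And>r. r \<ge> Rg \<Longrightarrow> bound r < \<eta>"
    unfolding eventually_at_top_linorder by blast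
  have "cmod (low_part Z L x) \<le> \<eta> * (1 + cmod x) ^ d"
    if ZL: "exp L = Z" and Z: "Z \<noteq> 0" and R: "cmod Z \<ge> Rg" for Z L x
  proof -
    have "cmod (low_part Z L x)
          \<le> (\<Sum>(n, m)\<in>low_terms. cmod (a n m * (Z ^ n * exp (- of_real \<alpha> * L) ^ (d - m) / Z ^ \<gamma>)))
             * (1 + cmod x) ^ d"
      unfolding low_part_def by (rule norm_monomial_sum_le) (rule low_terms_gap(1))
    also have "(\<Sum>(n, m)\<in>low_terms. cmod (a n m * (Z ^ n * exp (- of_real \<alpha> * L) ^ (d - m) / Z ^ \<gamma>)))
             = bound (cmod Z)"
      unfolding bound_def e_def case_prod_unfold norm_mult
      using norm_weight_scale[OF ZL Z low_terms_gap(1)] by (intro sum.cong) auto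
    also have "bound (cmod Z) * (1 + cmod x) ^ d \<le> \<eta> * (1 + cmod x) ^ d"
      using Rg[OF R] by (intro mult_right_mono) auto
    finally show ?thesis .
  qed
  then show ?thesis using that by blast
qed

text \<open>Quantities along the orbit of the base point \<open>z\<close>: the rescaling factor
  \<open>(p^n z)^(-\<alpha>)\<close>, the rescaled fibre orbit \<open>W_n = (p^n z)^(-\<alpha>) Q_z^n(w)\<close>, and the
  multiplicative and additive errors by which its recursion differs from \<open>h\<close>.\<close>

definition "rescale z n = exp (- of_real \<alpha> * orbit_log p \<delta> z n)"
definition "rescaled_orbit z w n = Qiter p a n z w * rescale z n"
definition "mult_error z n = exp (- of_real \<alpha> * Ln ((poly p ^^ Suc n) z / ((poly p ^^ n) z) ^ \<delta>))"
definition "add_error z n x = mult_error z n * low_part ((poly p ^^ n) z) (orbit_log p \<delta> z n) x"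

lemma rescaled_orbit_step:
  assumes nz: "\<And>n. (poly p ^^ n) z \<noteq> 0"
  shows "rescaled_orbit z w (Suc n)
       = mult_error z n * h (rescaled_orbit z w n) + add_error z n (rescaled_orbit z w n)"
proof -
  have "rescaled_orbit z w (Suc n)
      = qeval a ((poly p ^^ n) z) (rescaled_orbit z w n / rescale z n) * rescale z (Suc n)"
    unfolding rescaled_orbit_def Qiter_Suc by (simp add: rescale_def)
  also have "\<dots> = mult_error z n * h (rescaled_orbit z w n) + add_error z n (rescaled_orbit z w n)"
    unfolding rescale_def orbit_log.simps(2) add_error_def mult_error_def
    by (rule rescaled_step[OF exp_orbit_log[OF nz] nz])
  finally show ?thesis .
qed

lemma G_alpha_rescaled:
  assumes nz: "\<And>n. (poly p ^^ n) z \<noteq> 0"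
  shows "G_alpha p a d \<alpha> z w = escape_rate d (\<lambda>k. cmod (rescaled_orbit z w k))"
proof -
  have "cmod (Qiter p a k z w) / cmod ((poly p ^^ k) z) powr \<alpha> = cmod (rescaled_orbit z w k)" for k
  proof -
    have "cmod (rescale z k) = exp (- (\<alpha> * ln (cmod ((poly p ^^ k) z))))"
      unfolding rescale_def using Re_eq_ln_norm_exp[OF exp_orbit_log[OF nz] nz] by simp
    then show ?thesis
      using nz[of k] unfolding rescaled_orbit_def by (simp add: norm_mult powr_def exp_minus field_simps)
  qed
  then show ?thesis unfolding G_alpha_def escape_rate_def by simp
qed

lemma rescaled_orbit_0: "z \<noteq> 0 \<Longrightarrow> rescaled_orbit z w 0 = z powr (complex_of_real (- \<alpha>)) * w"
  unfolding rescaled_orbit_def rescale_def by (simp add: powr_def mult.commute)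

text \<open>For base points far out, the orbit of \<open>z\<close> escapes and, since \<open>p(u)/u^\<delta> \<rightarrow> 1\<close>,
  the multipliers of the rescaled recursion are uniformly close to 1.\<close>

lemma base_orbit_escape:
  assumes "\<eta> > 0"
  obtains R where "R \<ge> 2"
    and "\<And>z n. cmod z > R \<Longrightarrow> cmod ((poly p ^^ n) z) \<ge> cmod z"
    and "\<And>z n. cmod z > R \<Longrightarrow> cmod (mult_error z n - 1) < \<eta>"
proof -
  obtain \<rho> where \<rho>: "\<rho> > 0"
    and near_one: "\<And>u. cmod (u - 1) < \<rho> \<Longrightarrow> cmod (exp (- of_real \<alpha> * Ln u) - 1) < \<eta>"
    using principal_power_near_one[OF assms] by blast
  obtain S where S0: "S \<ge> 0" and ratio: "\<And>u. cmod u \<ge> 1 \<Longrightarrow> cmod (poly p u / u ^ \<delta> - 1) \<le> S / cmod u"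
    and far: "\<And>z n. cmod z \<ge> max 2 (2 * S) \<Longrightarrow> cmod ((poly p ^^ n) z) \<ge> cmod z"
    using monic_poly_escape[OF p_monic p_deg \<delta>_ge] by blast
  define R where "R = max (max 2 (2 * S)) (S / \<rho>)"
  have far_z: "cmod ((poly p ^^ n) z) \<ge> cmod z" and z2: "cmod z \<ge> 2" if "cmod z > R" for z n
    using far[of z n] that unfolding R_def by auto
  have "cmod (mult_error z n - 1) < \<eta>" if z: "cmod z > R" for z n
  proof -
    let ?u = "(poly p ^^ n) z"
    have "cmod (poly p ?u / ?u ^ \<delta> - 1) \<le> S / cmod ?u"
      using far_z[OF z, of n] z2[OF z] by (intro ratio) simp
    also have "\<dots> \<le> S / cmod z"
      using far_z[OF z, of n] z2[OF z] S0 by (intro divide_left_mono mult_pos_pos) auto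
    also have "\<dots> < \<rho>" using z z2[OF z] \<rho> unfolding R_def by (simp add: divide_less_eq mult.commute)
    finally show ?thesis unfolding mult_error_def using near_one by simp
  qed
  moreover have "R \<ge> 2" unfolding R_def by simp
  ultimately show ?thesis using that far_z by blast
qed

lemma orbit_errors_small:
  assumes "\<eta> > 0"
  obtains R where "R > 0"
    and "\<And>z n. cmod z > R \<Longrightarrow> (poly p ^^ n) z \<noteq> 0"
    and "\<And>z n. cmod z > R \<Longrightarrow> cmod (mult_error z n - 1) \<le> \<eta>"
    and "\<And>z n x. cmod z > R \<Longrightarrow> cmod (add_error z n x) \<le> \<eta> * (1 + cmod x) ^ d"
proof -
  define \<eta>' where "\<eta>' = min \<eta> 1"
  have \<eta>': "\<eta>' > 0" "\<eta>' \<le> \<eta>" "\<eta>' \<le> 1" unfolding \<eta>'_def using assms by auto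
  obtain R0 where R0: "R0 \<ge> 2" and far: "\<And>z n. cmod z > R0 \<Longrightarrow> cmod ((poly p ^^ n) z) \<ge> cmod z"
    and mult: "\<And>z n. cmod z > R0 \<Longrightarrow> cmod (mult_error z n - 1) < \<eta>'"
    using base_orbit_escape[OF \<eta>'(1)] by blast
  obtain Rg where low: "\<And>Z L x. exp L = Z \<Longrightarrow> Z \<noteq> 0 \<Longrightarrow> cmod Z \<ge> Rg \<Longrightarrow>
                          cmod (low_part Z L x) \<le> \<eta>' / 2 * (1 + cmod x) ^ d"
    using low_part_small[of "\<eta>' / 2"] \<eta>' by auto
  define R where "R = max R0 Rg"
  have nz: "(poly p ^^ n) z \<noteq> 0" if "cmod z > R" for z n
    using far[of z n] R0 that unfolding R_def by auto
  have add: "cmod (add_error z n x) \<le> \<eta> * (1 + cmod x) ^ d" if z: "cmod z > R" for z n x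
  proof -
    have "cmod (mult_error z n) \<le> 2"
      using mult[of z n] z norm_triangle_ineq2[of "mult_error z n" 1] \<eta>' unfolding R_def by simp
    moreover have "cmod (low_part ((poly p ^^ n) z) (orbit_log p \<delta> z n) x) \<le> \<eta>' / 2 * (1 + cmod x) ^ d"
      using z far[of z n] nz[OF z] unfolding R_def by (intro low exp_orbit_log) auto
    ultimately have "cmod (add_error z n x) \<le> 2 * (\<eta>' / 2 * (1 + cmod x) ^ d)"
      unfolding add_error_def norm_mult by (intro mult_mono) auto
    also have "\<dots> = \<eta>' * (1 + cmod x) ^ d" by simp
    also have "\<dots> \<le> \<eta> * (1 + cmod x) ^ d" using \<eta>' by (intro mult_right_mono) auto
    finally show ?thesis .
  qed
  have "cmod (mult_error z n - 1) \<le> \<eta>" if "cmod z > R" for z n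
    using mult[of z n] that \<eta>' unfolding R_def by simp
  moreover have "R > 0" using R0 unfolding R_def by simp
  ultimately show ?thesis using that nz add by blast
qed

theorem green_asymptotics:
  assumes eps: "\<epsilon> > 0"
  shows "\<exists>R>0. \<forall>z w. cmod z > R \<longrightarrow>
           \<bar>G_alpha p a d \<alpha> z w - G_green h d (z powr (complex_of_real (- \<alpha>)) * w)\<bar> < \<epsilon>"
proof -
  obtain B R1 C where "green_regular h d B R1 C" using h_regular by blast
  then obtain \<eta> where "\<eta> > 0" and stable:
    "\<And>\<theta> E X. (\<forall>n. cmod (\<theta> n - 1) \<le> \<eta>) \<Longrightarrow> (\<forall>n x. cmod (E n x) \<le> \<eta> * (1 + cmod x) ^ d)
      \<Longrightarrow> (\<forall>n. X (Suc n) = \<theta> n * h (X n) + E n (X n))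
      \<Longrightarrow> \<bar>escape_rate d (\<lambda>k. cmod (X k)) - G_green h d (X 0)\<bar> < \<epsilon>"
    using green_regular.perturbed_escape_rate_tendsto_green[OF _ eps] by blast
  then obtain R where "R > 0" and nz: "\<And>z n. cmod z > R \<Longrightarrow> (poly p ^^ n) z \<noteq> 0"
    and mult: "\<And>z n. cmod z > R \<Longrightarrow> cmod (mult_error z n - 1) \<le> \<eta>"
    and add: "\<And>z n x. cmod z > R \<Longrightarrow> cmod (add_error z n x) \<le> \<eta> * (1 + cmod x) ^ d"
    using orbit_errors_small by metis
  have "\<bar>G_alpha p a d \<alpha> z w - G_green h d (z powr (complex_of_real (- \<alpha>)) * w)\<bar> < \<epsilon>"
    if z: "cmod z > R" for z w
  proof -
    have "\<bar>escape_rate d (\<lambda>k. cmod (rescaled_orbit z w k)) - G_green h d (rescaled_orbit z w 0)\<bar> < \<epsilon>"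
      using mult[OF z] add[OF z] rescaled_orbit_step[OF nz[OF z]] by (intro stable) auto
    moreover have "z \<noteq> 0" using nz[OF z, of 0] by simp
    ultimately show ?thesis using G_alpha_rescaled[OF nz[OF z]] rescaled_orbit_0 by simp
  qed
  then show ?thesis using \<open>R > 0\<close> by blast
qed

end

theorem proposition5p11:
  fixes p :: "complex poly" and a :: "nat \<Rightarrow> nat \<Rightarrow> complex"
    and \<delta> d \<gamma> :: nat
  assumes p_monic: "lead_coeff p = 1" and p_deg: "degree p = \<delta>" and \<delta>_ge: "\<delta> \<ge> 2"
    and q_fin: "finite (supp2 a)"
    and q_degw: "\<And>n m. m > d \<Longrightarrow> a n m = 0"
    and d_ge: "d \<ge> 2"
    and b_monic: "a \<gamma> d = 1" and b_deg: "\<And>n. n > \<gamma> \<Longrightarrow> a n d = 0"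
    and \<delta>_lt: "\<delta> < d" and \<gamma>_ge: "\<gamma> \<ge> 1"
    and alpha_eq: "alpha_exp a \<gamma> \<delta> d = real \<gamma> / (real \<delta> - real d)"
  shows "\<forall>\<epsilon>>0. \<exists>R>0. \<forall>z w. cmod z > R \<longrightarrow>
           \<bar>G_alpha p a d (alpha_exp a \<gamma> \<delta> d) z w
             - G_green (hpoly a (alpha_exp a \<gamma> \<delta> d) \<gamma> d) d
                 (z powr (complex_of_real (- alpha_exp a \<gamma> \<delta> d)) * w)\<bar> < \<epsilon>"
proof -
  interpret skew_product p a \<delta> d \<gamma>
    using assms by unfold_locales
  show ?thesis using green_asymptotics unfolding \<alpha>_def by blast
qed

end
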